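(* Define the relation $\succeq^4$ on $\mathcal{A}$ by $\mathbf{A}\succeq^4\mathbf{B}\iff\lambda(\mathbf{A})\le\lambda(\mathbf{B})$, where for $\mathbf{A}=[a_{ij}]$ of size $n$, $\lambda(\mathbf{A})=\max_{1\le i<j<k\le n}\max\{a_{jk}/a_{ik},\ a_{ik}/a_{jk}\}$. Then $\succeq^4$ is an inconsistency ranking that satisfies PR, IIP, HTE, MON and RED, but does not satisfy SI.
   Context: A pairwise comparison matrix of size $n$ is a matrix $\mathbf{A}=[a_{ij}]\in\mathbb{R}^{n\times n}$ with all entries positive and $a_{ji}=1/a_{ij}$ for all $i,j$. Let $\mathcal{A}$ denote the set of all pairwise comparison matrices of all sizes $n\ge 3$. For $\mathbf{A}\in\mathcal{A}$ of size $n$ and $3\le m\le n$, a submatrix of $\mathbf{A}$ is a matrix $\mathbf{B}=[b_{ij}]$ of size $m$ with $b_{ij}=a_{\sigma(i)\sigma(j)}$ for some strictly increasing map $\sigma:\{1,\dots,m\}\to\{1,\dots,n\}$. A triad is a pairwise comparison matrix of size $3$; a triad of $\mathbf{A}$ is a submatrix of $\mathbf{A}$ of size $3$ (when $n=3$, $\mathbf{A}$ is its own unique triad). A triad $\mathbf{T}$ is written $\mathbf{T}=(t_1;t_2;t_3)$, meaning $t_{12}=t_1$, $t_{13}=t_2$, $t_{23}=t_3$ (the remaining entries are determined by reciprocity); $\mathbf{T}^\top$ denotes its transpose, i.e. the triad $(1/t_1;1/t_2;1/t_3)$. An inconsistency ranking is a complete and transitive binary relation $\succeq$ on $\mathcal{A}$;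 $\mathbf{A}\sim\mathbf{B}$ means $\mathbf{A}\succeq\mathbf{B}$ and $\mathbf{B}\succeq\mathbf{A}$; $\mathbf{A}\preceq\mathbf{B}$ means $\mathbf{B}\succeq\mathbf{A}$. Properties of an inconsistency ranking $\succeq$: (PR) for all $s_2,t_2\ge 1$: $(1;s_2;1)\succeq(1;t_2;1)\iff s_2\le t_2$. (IIP) $\mathbf{T}\sim\mathbf{T}^\top$ for every triad $\mathbf{T}$. (HTE) $(1;t_2;t_3)\sim(1;t_2/t_3;1)$ for all $t_2,t_3>0$. (SI) $(t_1;t_2;t_3)\sim(kt_1;k^2t_2;kt_3)$ for all $t_1,t_2,t_3>0$ and all $k>0$. (MON) $\mathbf{A}\preceq\mathbf{T}$ for every $\mathbf{A}\in\mathcal{A}$ and every triad $\mathbf{T}$ of $\mathbf{A}$. (RED) every $\mathbf{A}\in\mathcal{A}$ has a triad $\mathbf{T}$ with $\mathbf{A}\sim\mathbf{T}$. *)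

theory Defs
  imports Main Complex_Main
begin

text \<open>A square real matrix of size n is represented as a pair (n, a) with entries
  a i j for 0 \<le> i, j < n (0-based indices). To make the representation canonical,
  entries outside the index range are required to be 0.\<close>

type_synonym pcmat = "nat \<times> (nat \<Rightarrow> nat \<Rightarrow> real)"

definition msize :: "pcmat \<Rightarrow> nat" where "msize A = fst A"
definition ent :: "pcmat \<Rightarrow> nat \<Rightarrow> nat \<Rightarrow> real" where "ent A = snd A"

definition PCM :: "pcmat set" where
  "PCM = {(n, a). n \<ge> 3 \<and>
      (\<forall>i<n. \<forall>j<n. a i j > 0 \<and> a j i = 1 / a i j) \<and>
      (\<forall>i j. (n \<le> i \<or> n \<le> j) \<longrightarrow> a i j = 0)}"

definition submat :: "pcmat \<Rightarrow> nat \<Rightarrow> (nat \<Rightarrow> nat) \<Rightarrow> pcmat" where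
  "submat A m \<sigma> = (m, \<lambda>i j. if i < m \<and> j < m then ent A (\<sigma> i) (\<sigma> j) else 0)"

definition is_submatrix :: "pcmat \<Rightarrow> pcmat \<Rightarrow> bool" where
  "is_submatrix B A \<longleftrightarrow> 3 \<le> msize B \<and> msize B \<le> msize A \<and>
     (\<exists>\<sigma>. strict_mono_on {0..<msize B} \<sigma> \<and> \<sigma> ` {0..<msize B} \<subseteq> {0..<msize A}
          \<and> B = submat A (msize B) \<sigma>)"

definition is_triad_of :: "pcmat \<Rightarrow> pcmat \<Rightarrow> bool" where
  "is_triad_of T A \<longleftrightarrow> is_submatrix T A \<and> msize T = 3"

text \<open>The triad (t1; t2; t3): t12 = t1, t13 = t2, t23 = t3 (1-based), reciprocal elsewhere.\<close>
definition triad :: "real \<Rightarrow> real \<Rightarrow> real \<Rightarrow> pcmat" where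
  "triad t1 t2 t3 = (3, \<lambda>i j.
     if i = 0 \<and> j = 0 then 1 else if i = 1 \<and> j = 1 then 1 else if i = 2 \<and> j = 2 then 1
     else if i = 0 \<and> j = 1 then t1 else if i = 1 \<and> j = 0 then 1 / t1
     else if i = 0 \<and> j = 2 then t2 else if i = 2 \<and> j = 0 then 1 / t2
     else if i = 1 \<and> j = 2 then t3 else if i = 2 \<and> j = 1 then 1 / t3
     else 0)"

definition mtranspose :: "pcmat \<Rightarrow> pcmat" where
  "mtranspose A = (msize A, \<lambda>i j. ent A j i)"

definition inconsistency_ranking :: "(pcmat \<Rightarrow> pcmat \<Rightarrow> bool) \<Rightarrow> bool" where
  "inconsistency_ranking R \<longleftrightarrow>
     (\<forall>A\<in>PCM. \<forall>B\<in>PCM. R A B \<or> R B A) \<and>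
     (\<forall>A\<in>PCM. \<forall>B\<in>PCM. \<forall>C\<in>PCM. R A B \<longrightarrow> R B C \<longrightarrow> R A C)"

definition indiff :: "(pcmat \<Rightarrow> pcmat \<Rightarrow> bool) \<Rightarrow> pcmat \<Rightarrow> pcmat \<Rightarrow> bool" where
  "indiff R A B \<longleftrightarrow> R A B \<and> R B A"

definition PR :: "(pcmat \<Rightarrow> pcmat \<Rightarrow> bool) \<Rightarrow> bool" where
  "PR R \<longleftrightarrow> (\<forall>s2 t2. 1 \<le> s2 \<longrightarrow> 1 \<le> t2 \<longrightarrow>
      (R (triad 1 s2 1) (triad 1 t2 1) \<longleftrightarrow> s2 \<le> t2))"

definition IIP :: "(pcmat \<Rightarrow> pcmat \<Rightarrow> bool) \<Rightarrow> bool" where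
  "IIP R \<longleftrightarrow> (\<forall>T\<in>PCM. msize T = 3 \<longrightarrow> indiff R T (mtranspose T))"

definition HTE :: "(pcmat \<Rightarrow> pcmat \<Rightarrow> bool) \<Rightarrow> bool" where
  "HTE R \<longleftrightarrow> (\<forall>t2 t3. 0 < t2 \<longrightarrow> 0 < t3 \<longrightarrow>
      indiff R (triad 1 t2 t3) (triad 1 (t2 / t3) 1))"

definition SI :: "(pcmat \<Rightarrow> pcmat \<Rightarrow> bool) \<Rightarrow> bool" where
  "SI R \<longleftrightarrow> (\<forall>t1 t2 t3 k. 0 < t1 \<longrightarrow> 0 < t2 \<longrightarrow> 0 < t3 \<longrightarrow> 0 < k \<longrightarrow>
      indiff R (triad t1 t2 t3) (triad (k * t1) (k^2 * t2) (k * t3)))"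

text \<open>MON: A \<preceq> T, i.e. T \<succeq> A, for every triad T of A.\<close>
definition MON :: "(pcmat \<Rightarrow> pcmat \<Rightarrow> bool) \<Rightarrow> bool" where
  "MON R \<longleftrightarrow> (\<forall>A\<in>PCM. \<forall>T. is_triad_of T A \<longrightarrow> R T A)"

definition RED :: "(pcmat \<Rightarrow> pcmat \<Rightarrow> bool) \<Rightarrow> bool" where
  "RED R \<longleftrightarrow> (\<forall>A\<in>PCM. \<exists>T. is_triad_of T A \<and> indiff R A T)"

definition lam :: "pcmat \<Rightarrow> real" where
  "lam A = Max {max (ent A j k / ent A i k) (ent A i k / ent A j k) | i j k.
                  i < j \<and> j < k \<and> k < msize A}"

definition rank4 :: "pcmat \<Rightarrow> pcmat \<Rightarrow> bool" where
  "rank4 A B \<longleftrightarrow> A \<in> PCM \<and> B \<in> PCM \<and> lam A \<le> lam B"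

end

theory Submission
  imports Defs
begin

text \<open>The quantity maximised in \<open>\<lambda>(A)\<close> at \<open>(i, j, k)\<close> depends only on the triad of \<open>A\<close>
  on rows and columns \<open>i < j < k\<close>, and for that triad it is the whole of \<open>\<lambda>\<close>. Hence a
  triad never has larger \<open>\<lambda>\<close> than the matrix (MON), and a triad at a maximising position
  has the same \<open>\<lambda>\<close> (RED). For a triad \<open>(t\<^sub>1; t\<^sub>2; t\<^sub>3)\<close>, \<open>\<lambda> = max (t\<^sub>2/t\<^sub>3) (t\<^sub>3/t\<^sub>2)\<close>,
  which gives PR, HTE and IIP at once; SI fails because scaling \<open>(1; 1; 1)\<close> with \<open>k = 2\<close>
  yields \<open>(2; 4; 2)\<close>, whose \<open>\<lambda>\<close> is 2 instead of 1.\<close>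

lemma ent_pair [simp]: "ent (n, a) = a"
  by (simp add: ent_def)

lemma msize_pair [simp]: "msize (n, a) = n"
  by (simp add: msize_def)

lemma PCM_iff:
  "A \<in> PCM \<longleftrightarrow> 3 \<le> msize A \<and>
     (\<forall>i<msize A. \<forall>j<msize A. 0 < ent A i j \<and> ent A j i = 1 / ent A i j) \<and>
     (\<forall>i j. msize A \<le> i \<or> msize A \<le> j \<longrightarrow> ent A i j = 0)"
  by (cases A) (simp add: PCM_def)

lemma PCM_msize_ge: "A \<in> PCM \<Longrightarrow> 3 \<le> msize A"
  unfolding PCM_iff by blast

lemma PCM_ent_pos: "A \<in> PCM \<Longrightarrow> i < msize A \<Longrightarrow> j < msize A \<Longrightarrow> 0 < ent A i j"
  unfolding PCM_iff by blast

(* Not a simp rule: it rewrites ent A j i and ent A i j into each other. *)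
lemma PCM_ent_recip:
  "A \<in> PCM \<Longrightarrow> i < msize A \<Longrightarrow> j < msize A \<Longrightarrow> ent A j i = 1 / ent A i j"
  unfolding PCM_iff by blast

lemma lam_set_finite:
  "finite {max (ent A j k / ent A i k) (ent A i k / ent A j k) | i j k.
             i < j \<and> j < k \<and> k < msize A}"
proof -
  let ?r = "\<lambda>(i, j, k). max (ent A j k / ent A i k) (ent A i k / ent A j k)"
  have "{max (ent A j k / ent A i k) (ent A i k / ent A j k) | i j k.
           i < j \<and> j < k \<and> k < msize A}
        \<subseteq> ?r ` ({..<msize A} \<times> {..<msize A} \<times> {..<msize A})"
    by (force simp: image_iff)
  then show ?thesis
    by (rule finite_subset) simp
qed

lemma lam_ge:
  assumes "i < j" "j < k" "k < msize A"
  shows "max (ent A j k / ent A i k) (ent A i k / ent A j k) \<le> lam A"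
  unfolding lam_def using assms by (intro Max_ge[OF lam_set_finite]) blast

lemma lam_attained:
  assumes "3 \<le> msize A"
  obtains i j k where "i < j" "j < k" "k < msize A"
    and "lam A = max (ent A j k / ent A i k) (ent A i k / ent A j k)"
proof -
  have "{max (ent A j k / ent A i k) (ent A i k / ent A j k) | i j k.
           i < j \<and> j < k \<and> k < msize A} \<noteq> {}"
  proof -
    have "0 < (1::nat)" "1 < (2::nat)" "2 < msize A"
      using assms by auto
    then show ?thesis
      by blast
  qed
  from Max_in[OF lam_set_finite this] show thesis
    using that unfolding lam_def by blast
qed

lemma lam_msize_3:
  assumes "msize A = 3"
  shows "lam A = max (ent A 1 2 / ent A 0 2) (ent A 0 2 / ent A 1 2)"
proof -
  have "{max (ent A j k / ent A i k) (ent A i k / ent A j k) | i j k.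
           i < j \<and> j < k \<and> k < msize A}
        = {max (ent A 1 2 / ent A 0 2) (ent A 0 2 / ent A 1 2)}"
  proof -
    have "i < j \<and> j < k \<and> k < 3 \<longleftrightarrow> i = 0 \<and> j = 1 \<and> k = (2::nat)" for i j k
      by auto
    then show ?thesis
      using assms by auto
  qed
  then show ?thesis
    by (simp add: lam_def)
qed

lemma lam_triad: "lam (triad t1 t2 t3) = max (t3 / t2) (t2 / t3)"
  by (subst lam_msize_3) (simp_all add: triad_def)

lemma lam_submat_3:
  "lam (submat A 3 \<sigma>) =
     max (ent A (\<sigma> 1) (\<sigma> 2) / ent A (\<sigma> 0) (\<sigma> 2)) (ent A (\<sigma> 0) (\<sigma> 2) / ent A (\<sigma> 1) (\<sigma> 2))"
  by (subst lam_msize_3) (simp_all add: submat_def)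

lemma lam_mtranspose_msize_3:
  assumes "T \<in> PCM" "msize T = 3"
  shows "lam (mtranspose T) = lam T"
proof -
  have "ent T 2 1 = 1 / ent T 1 2" "ent T 2 0 = 1 / ent T 0 2"
    using PCM_ent_recip[OF assms(1), of 1 2] PCM_ent_recip[OF assms(1), of 0 2] assms(2)
    by simp_all
  moreover have "0 < ent T 1 2" "0 < ent T 0 2"
    using PCM_ent_pos[OF assms(1)] assms(2) by simp_all
  ultimately have "max (ent T 2 1 / ent T 2 0) (ent T 2 0 / ent T 2 1)
      = max (ent T 1 2 / ent T 0 2) (ent T 0 2 / ent T 1 2)"
    by (simp add: max.commute)
  moreover have "msize (mtranspose T) = 3"
    using assms(2) by (simp add: mtranspose_def)
  ultimately show ?thesis
    using assms(2) by (simp add: lam_msize_3 mtranspose_def)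
qed

lemma all_less_3: "(\<forall>i<3. P i) \<longleftrightarrow> P 0 \<and> P 1 \<and> P (2::nat)"
proof -
  have "i < 3 \<longleftrightarrow> i = 0 \<or> i = 1 \<or> i = (2::nat)" for i
    by auto
  then show ?thesis
    by metis
qed

lemma msize_triad [simp]: "msize (triad t1 t2 t3) = 3"
  by (simp add: triad_def)

lemma triad_in_PCM:
  assumes "0 < t1" "0 < t2" "0 < t3"
  shows "triad t1 t2 t3 \<in> PCM"
proof -
  have "\<forall>i<3. \<forall>j<3. 0 < ent (triad t1 t2 t3) i j \<and>
          ent (triad t1 t2 t3) j i = 1 / ent (triad t1 t2 t3) i j"
    unfolding all_less_3 using assms by (simp add: triad_def)
  moreover have "\<forall>i j. 3 \<le> i \<or> 3 \<le> j \<longrightarrow> ent (triad t1 t2 t3) i j = 0"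
    by (auto simp: triad_def)
  ultimately show ?thesis
    unfolding PCM_iff msize_triad by blast
qed

lemma submat_in_PCM:
  assumes "A \<in> PCM" "3 \<le> m" "\<sigma> ` {0..<m} \<subseteq> {0..<msize A}"
  shows "submat A m \<sigma> \<in> PCM"
  unfolding PCM_iff
proof (intro conjI allI impI)
  fix i j
  assume "i < msize (submat A m \<sigma>)" "j < msize (submat A m \<sigma>)"
  then have ij: "i < m" "j < m"
    by (simp_all add: submat_def)
  then have "\<sigma> i < msize A" "\<sigma> j < msize A"
    using assms(3) by fastforce+
  then have "0 < ent A (\<sigma> i) (\<sigma> j)"
    and "ent A (\<sigma> j) (\<sigma> i) = 1 / ent A (\<sigma> i) (\<sigma> j)"
    using PCM_ent_pos[OF assms(1)] PCM_ent_recip[OF assms(1)] by blast+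
  with ij show "0 < ent (submat A m \<sigma>) i j"
    and "ent (submat A m \<sigma>) j i = 1 / ent (submat A m \<sigma>) i j"
    by (simp_all add: submat_def)
qed (use assms(2) in \<open>auto simp: submat_def\<close>)

lemma mtranspose_in_PCM:
  assumes "A \<in> PCM"
  shows "mtranspose A \<in> PCM"
proof -
  have "msize (mtranspose A) = msize A" "ent (mtranspose A) = (\<lambda>i j. ent A j i)"
    by (simp_all add: mtranspose_def)
  with assms show ?thesis
    unfolding PCM_iff by metis
qed

lemma inconsistency_ranking_rank4: "inconsistency_ranking rank4"
  unfolding inconsistency_ranking_def rank4_def by auto

lemma PR_rank4: "PR rank4"
proof -
  have lam_triad_1: "lam (triad 1 s 1) = s" if "1 \<le> s" for s :: real
  proof -
    have "1 / s \<le> s"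
      using that by (meson divide_le_eq_1 dual_order.trans less_le_trans zero_less_one)
    then show ?thesis
      by (simp add: lam_triad max_absorb2)
  qed
  show ?thesis
    unfolding PR_def rank4_def by (simp add: lam_triad_1 triad_in_PCM)
qed

lemma IIP_rank4: "IIP rank4"
  unfolding IIP_def indiff_def rank4_def
  by (simp add: mtranspose_in_PCM lam_mtranspose_msize_3)

lemma HTE_rank4: "HTE rank4"
  unfolding HTE_def indiff_def rank4_def by (simp add: triad_in_PCM lam_triad)

lemma MON_rank4: "MON rank4"
  unfolding MON_def rank4_def
proof (intro ballI allI impI conjI)
  fix A T
  assume A: "A \<in> PCM" and "is_triad_of T A"
  then obtain \<sigma> where mono: "strict_mono_on {0..<3} \<sigma>"
    and range: "\<sigma> ` {0..<3} \<subseteq> {0..<msize A}" and T: "T = submat A 3 \<sigma>"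
    unfolding is_triad_of_def is_submatrix_def by auto
  show "T \<in> PCM"
    using submat_in_PCM[OF A _ range] T by simp
  have "\<sigma> 0 < \<sigma> 1" "\<sigma> 1 < \<sigma> 2"
    using mono by (auto simp: strict_mono_on_def)
  moreover have "\<sigma> 2 < msize A"
    using range by (auto simp: image_subset_iff)
  ultimately show "lam T \<le> lam A"
    unfolding T lam_submat_3 by (rule lam_ge)
qed (simp)

lemma RED_rank4: "RED rank4"
  unfolding RED_def
proof
  fix A
  assume A: "A \<in> PCM"
  then obtain i j k where ijk: "i < j" "j < k" "k < msize A"
    and lam_A: "lam A = max (ent A j k / ent A i k) (ent A i k / ent A j k)"
    using lam_attained PCM_msize_ge by blast
  define \<sigma> where "\<sigma> x = (if x = 0 then i else if x = 1 then j else k)" for x :: nat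
  have mono: "strict_mono_on {0..<3} \<sigma>"
    using ijk by (auto simp: strict_mono_on_def \<sigma>_def)
  have range: "\<sigma> ` {0..<3} \<subseteq> {0..<msize A}"
    using ijk by (auto simp: \<sigma>_def)
  have "is_triad_of (submat A 3 \<sigma>) A"
    unfolding is_triad_of_def is_submatrix_def
    using mono range PCM_msize_ge[OF A] by (auto simp: submat_def)
  moreover have "lam (submat A 3 \<sigma>) = lam A"
    by (simp add: lam_submat_3 lam_A \<sigma>_def)
  ultimately show "\<exists>T. is_triad_of T A \<and> indiff rank4 A T"
    using A submat_in_PCM[OF A _ range] unfolding indiff_def rank4_def
    by (intro exI[of _ "submat A 3 \<sigma>"]) simp
qed

lemma not_SI_rank4: "\<not> SI rank4"
proof
  assume "SI rank4"
  then have "indiff rank4 (triad 1 1 1) (triad (2 * 1) (2^2 * 1) (2 * 1))"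
    unfolding SI_def by (meson zero_less_one zero_less_numeral)
  then show False
    by (simp add: indiff_def rank4_def lam_triad)
qed

theorem mainTheorem5:
  shows "inconsistency_ranking rank4 \<and> PR rank4 \<and> IIP rank4 \<and> HTE rank4 \<and>
         MON rank4 \<and> RED rank4 \<and> \<not> SI rank4"
  using inconsistency_ranking_rank4 PR_rank4 IIP_rank4 HTE_rank4 MON_rank4 RED_rank4 not_SI_rank4
  by blast

end
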